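(* Let $\mathcal{H}$ and $\mathcal{K}$ be finite-dimensional complex Hilbert spaces with $\dim\mathcal{H}\ge 2$. Let $\mathcal{HP}$ be the set of all Hermitian-preserving trace-preserving linear maps $B(\mathcal{H})\to B(\mathcal{K})$, and $\mathcal{SP},\mathcal{SN}\subseteq\mathcal{HP}$ the subsets of SP and SN maps. Then $\operatorname{Conv}(\mathcal{SP})=\operatorname{Conv}(\mathcal{SN})=\mathcal{HP}$, where $\operatorname{Conv}$ denotes the convex hull.
   Context: $B(\mathcal{H})$ denotes all linear operators on $\mathcal{H}$; a density matrix is a positive semidefinite operator of trace one. A map is Hermitian-preserving if $\Psi(X^\dagger)=\Psi(X)^\dagger$ and trace-preserving if $\operatorname{Tr}\Psi(X)=\operatorname{Tr}X$. An HPTP map $\Psi$ is SP if there is an invertible density matrix $\rho\in B(\mathcal{H})$ such that $\Psi(\rho)$ is an invertible density matrix; it is SN if there is a density matrix $\rho$ such that $\Psi(\rho)$ is a density matrix. *)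

theory Defs
  imports "HOL-Analysis.Analysis"
begin

text \<open>B(H) for H = C^'n is modelled as complex^'n^'n (operators as matrices).\<close>

definition cmat_scale :: "complex \<Rightarrow> complex^'n^'n \<Rightarrow> complex^'n^'n" where
  "cmat_scale c A = (\<chi> i j. c * A$i$j)"

definition cmat_adj :: "complex^'n^'n \<Rightarrow> complex^'n^'n" where
  "cmat_adj A = (\<chi> i j. cnj (A$j$i))"

definition complex_linear_map :: "(complex^'n^'n \<Rightarrow> complex^'m^'m) \<Rightarrow> bool" where
  "complex_linear_map f \<longleftrightarrow>
     (\<forall>A B. f (A + B) = f A + f B) \<and> (\<forall>c A. f (cmat_scale c A) = cmat_scale c (f A))"

definition hermitian_preserving :: "(complex^'n^'n \<Rightarrow> complex^'m^'m) \<Rightarrow> bool" where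
  "hermitian_preserving f \<longleftrightarrow> (\<forall>X. f (cmat_adj X) = cmat_adj (f X))"

definition trace_preserving :: "(complex^'n^'n \<Rightarrow> complex^'m^'m) \<Rightarrow> bool" where
  "trace_preserving f \<longleftrightarrow> (\<forall>X. trace (f X) = trace X)"

definition psd :: "complex^'n^'n \<Rightarrow> bool" where
  "psd A \<longleftrightarrow> cmat_adj A = A \<and>
     (\<forall>v::complex^'n. 0 \<le> Re (\<Sum>i\<in>UNIV. cnj (v$i) * (A *v v)$i))"

definition density_matrix :: "complex^'n^'n \<Rightarrow> bool" where
  "density_matrix A \<longleftrightarrow> psd A \<and> trace A = 1"

definition HP :: "(complex^'n^'n \<Rightarrow> complex^'m^'m) set" where
  "HP = {f. complex_linear_map f \<and> hermitian_preserving f \<and> trace_preserving f}"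

definition SP :: "(complex^'n^'n \<Rightarrow> complex^'m^'m) set" where
  "SP = {f \<in> HP. \<exists>\<rho>. density_matrix \<rho> \<and> invertible \<rho> \<and>
                    density_matrix (f \<rho>) \<and> invertible (f \<rho>)}"

definition SN :: "(complex^'n^'n \<Rightarrow> complex^'m^'m) set" where
  "SN = {f \<in> HP. \<exists>\<rho>. density_matrix \<rho> \<and> density_matrix (f \<rho>)}"

definition Conv :: "('a \<Rightarrow> 'b::real_vector) set \<Rightarrow> ('a \<Rightarrow> 'b) set" where
  "Conv S = {f. \<exists>(k::nat) (c::nat \<Rightarrow> real) g.
     (\<forall>i<k. 0 \<le> c i \<and> g i \<in> S) \<and> (\<Sum>i<k. c i) = 1 \<and>
     f = (\<lambda>x. \<Sum>i<k. c i *\<^sub>R g i x)}"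

end

theory Submission
  imports Defs
begin

text \<open>For \<Psi> \<in> HP and any linear Hermitian-preserving D with traceless values, \<Psi> + D and
  \<Psi> - D are again in HP and \<Psi> is their midpoint. Since dim H \<ge> 2 there are two invertible
  states \<rho> and \<rho>' and a real functional h with h \<rho> = 1 and h \<rho>' = -1; from h and the trace
  one builds a rank-two D such that (\<Psi> + D) \<rho> and (\<Psi> - D) \<rho>' are both the maximally mixed
  state, so both maps are SP. Hence HP \<subseteq> Conv SP \<subseteq> Conv SN \<subseteq> Conv HP = HP.\<close>

lemma cmat_scale_add: "cmat_scale c ((A::complex^'n^'n) + B) = cmat_scale c A + cmat_scale c B"
  by (simp add: cmat_scale_def vec_eq_iff algebra_simps)

lemma cmat_scale_diff: "cmat_scale c ((A::complex^'n^'n) - B) = cmat_scale c A - cmat_scale c B"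
  by (simp add: cmat_scale_def vec_eq_iff algebra_simps)

lemma cmat_scale_add_left: "cmat_scale (c + d) (A::complex^'n^'n) = cmat_scale c A + cmat_scale d A"
  by (simp add: cmat_scale_def vec_eq_iff algebra_simps)

lemma cmat_scale_mult: "cmat_scale (c * d) (A::complex^'n^'n) = cmat_scale c (cmat_scale d A)"
  by (simp add: cmat_scale_def vec_eq_iff)

lemma cmat_scale_one [simp]: "cmat_scale 1 (A::complex^'n^'n) = A"
  by (simp add: cmat_scale_def vec_eq_iff)

lemma cmat_scale_zero [simp]: "cmat_scale 0 (A::complex^'n^'n) = 0"
  by (simp add: cmat_scale_def vec_eq_iff)

lemma cmat_scale_sum: "cmat_scale c (\<Sum>i\<in>S. (A i::complex^'n^'n)) = (\<Sum>i\<in>S. cmat_scale c (A i))"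
  by (simp add: cmat_scale_def vec_eq_iff sum_distrib_left)

lemma cmat_scale_scaleR: "cmat_scale c (r *\<^sub>R (A::complex^'n^'n)) = r *\<^sub>R cmat_scale c A"
  by (simp add: cmat_scale_def vec_eq_iff scaleR_conv_of_real)

lemma cmat_adj_add: "cmat_adj ((A::complex^'n^'n) + B) = cmat_adj A + cmat_adj B"
  by (simp add: cmat_adj_def vec_eq_iff)

lemma cmat_adj_diff: "cmat_adj ((A::complex^'n^'n) - B) = cmat_adj A - cmat_adj B"
  by (simp add: cmat_adj_def vec_eq_iff)

lemma cmat_adj_cmat_scale: "cmat_adj (cmat_scale c (A::complex^'n^'n)) = cmat_scale (cnj c) (cmat_adj A)"
  by (simp add: cmat_scale_def cmat_adj_def vec_eq_iff)

lemma cmat_adj_sum: "cmat_adj (\<Sum>i\<in>S. (A i::complex^'n^'n)) = (\<Sum>i\<in>S. cmat_adj (A i))"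
  by (simp add: cmat_adj_def vec_eq_iff)

lemma cmat_adj_scaleR: "cmat_adj (r *\<^sub>R (A::complex^'n^'n)) = r *\<^sub>R cmat_adj A"
  by (simp add: cmat_adj_def vec_eq_iff complex_cnj_scaleR)

lemma trace_cmat_scale: "trace (cmat_scale c (A::complex^'n^'n)) = c * trace A"
  by (simp add: cmat_scale_def trace_def sum_distrib_left)

lemma trace_cmat_adj: "trace (cmat_adj (A::complex^'n^'n)) = cnj (trace A)"
  by (simp add: cmat_adj_def trace_def)

lemma trace_scaleR: "trace (r *\<^sub>R (A::complex^'n^'n)) = r *\<^sub>R trace A"
  by (simp add: trace_def scaleR_sum_right)

lemma trace_sum: "trace (\<Sum>i\<in>S. (A i::complex^'n^'n)) = (\<Sum>i\<in>S. trace (A i))"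
  unfolding trace_def by (simp add: sum.swap[of _ S])

lemma density_matrix_hermitian: "density_matrix \<rho> \<Longrightarrow> cmat_adj \<rho> = \<rho>"
  by (simp add: density_matrix_def psd_def)

lemma density_matrix_trace: "density_matrix \<rho> \<Longrightarrow> trace \<rho> = 1"
  by (simp add: density_matrix_def)

lemma SP_I:
  "f \<in> HP \<Longrightarrow> density_matrix \<rho> \<Longrightarrow> invertible \<rho> \<Longrightarrow> density_matrix (f \<rho>) \<Longrightarrow> invertible (f \<rho>)
    \<Longrightarrow> f \<in> SP"
  unfolding SP_def by blast

lemma SP_subset_SN: "SP \<subseteq> SN"
  unfolding SP_def SN_def by blast

lemma SN_subset_HP: "SN \<subseteq> HP"
  unfolding SN_def by blast

lemma Conv_mono: "S \<subseteq> T \<Longrightarrow> Conv S \<subseteq> Conv T"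
  unfolding Conv_def by blast

lemma midpoint_in_Conv:
  assumes "f \<in> S" "g \<in> S"
  shows "(\<lambda>x. (1/2::real) *\<^sub>R f x + (1/2::real) *\<^sub>R g x) \<in> Conv S"
proof -
  define G where "G = (\<lambda>i::nat. if i = 0 then f else g)"
  have "(\<lambda>x. (1/2::real) *\<^sub>R f x + (1/2::real) *\<^sub>R g x) = (\<lambda>x. \<Sum>i<2. (1/2::real) *\<^sub>R G i x)"
    by (simp add: G_def numeral_2_eq_2)
  moreover have "\<forall>i<2. 0 \<le> (1/2::real) \<and> G i \<in> S"
    using assms by (simp add: G_def)
  ultimately show ?thesis
    unfolding Conv_def by (intro CollectI exI[of _ 2] exI[of _ "\<lambda>_. 1/2"] exI[of _ G]) simp
qed

lemma Conv_HP_subset: "Conv (HP :: (complex^'n^'n \<Rightarrow> complex^'m^'m) set) \<subseteq> HP"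
proof
  fix f :: "complex^'n^'n \<Rightarrow> complex^'m^'m"
  assume "f \<in> Conv HP"
  then obtain k and c :: "nat \<Rightarrow> real" and g
    where cg: "\<forall>i<k. 0 \<le> c i \<and> g i \<in> HP" and sum_c: "(\<Sum>i<k. c i) = 1"
      and f: "f = (\<lambda>x. \<Sum>i<k. c i *\<^sub>R g i x)"
    unfolding Conv_def by blast
  have lin: "complex_linear_map (g i)" and herm: "hermitian_preserving (g i)"
    and tp: "trace_preserving (g i)" if "i < k" for i
    using cg that by (auto simp: HP_def)
  have "complex_linear_map f"
    using lin unfolding complex_linear_map_def f
    by (simp add: sum.distrib[symmetric] scaleR_add_right cmat_scale_sum cmat_scale_scaleR)
  moreover have "hermitian_preserving f"
    using herm unfolding hermitian_preserving_def f by (simp add: cmat_adj_sum cmat_adj_scaleR)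
  moreover have "trace_preserving f"
    unfolding trace_preserving_def
  proof
    fix X
    have "trace (f X) = (\<Sum>i<k. c i *\<^sub>R trace X)"
      using tp by (simp add: f trace_sum trace_scaleR trace_preserving_def)
    also have "\<dots> = trace X"
      using sum_c by (simp add: scaleR_sum_left[symmetric])
    finally show "trace (f X) = trace X" .
  qed
  ultimately show "f \<in> HP" by (simp add: HP_def)
qed

definition hermitian_functional :: "(complex^'n^'n \<Rightarrow> complex) \<Rightarrow> bool" where
  "hermitian_functional g \<longleftrightarrow> (\<forall>X Y. g (X + Y) = g X + g Y) \<and>
     (\<forall>c X. g (cmat_scale c X) = c * g X) \<and> (\<forall>X. g (cmat_adj X) = cnj (g X))"

lemma hermitian_functional_trace: "hermitian_functional trace"
  by (simp add: hermitian_functional_def trace_add trace_cmat_scale trace_cmat_adj)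

lemma hermitian_functional_diag_entry: "hermitian_functional (\<lambda>X. X $ a $ a)"
  by (simp add: hermitian_functional_def cmat_scale_def cmat_adj_def)

lemma hermitian_functional_add:
  "hermitian_functional f \<Longrightarrow> hermitian_functional g \<Longrightarrow> hermitian_functional (\<lambda>X. f X + g X)"
  by (simp add: hermitian_functional_def algebra_simps)

lemma hermitian_functional_diff:
  "hermitian_functional f \<Longrightarrow> hermitian_functional g \<Longrightarrow> hermitian_functional (\<lambda>X. f X - g X)"
  by (simp add: hermitian_functional_def algebra_simps)

lemma hermitian_functional_scale_real:
  "hermitian_functional f \<Longrightarrow> hermitian_functional (\<lambda>X. of_real r * f X)"
  by (simp add: hermitian_functional_def algebra_simps)

definition traceless_HP :: "(complex^'n^'n \<Rightarrow> complex^'m^'m) set" where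
  "traceless_HP = {D. complex_linear_map D \<and> hermitian_preserving D \<and> (\<forall>X. trace (D X) = 0)}"

lemma traceless_HP_add: "D \<in> traceless_HP \<Longrightarrow> E \<in> traceless_HP \<Longrightarrow> (\<lambda>X. D X + E X) \<in> traceless_HP"
  by (simp add: traceless_HP_def complex_linear_map_def hermitian_preserving_def cmat_scale_add
      cmat_adj_add trace_add algebra_simps)

lemma rank_one_in_traceless_HP:
  assumes "hermitian_functional g" "cmat_adj A = A" "trace A = 0"
  shows "(\<lambda>X. cmat_scale (g X) A) \<in> traceless_HP"
  using assms
  by (simp add: hermitian_functional_def traceless_HP_def complex_linear_map_def
      hermitian_preserving_def cmat_adj_cmat_scale trace_cmat_scale cmat_scale_add_left cmat_scale_mult)

lemma HP_add_diff_traceless_HP: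
  assumes "\<Psi> \<in> HP" "D \<in> traceless_HP"
  shows "(\<lambda>X. \<Psi> X + D X) \<in> HP" and "(\<lambda>X. \<Psi> X - D X) \<in> HP"
  using assms
  by (simp_all add: HP_def traceless_HP_def complex_linear_map_def hermitian_preserving_def
      trace_preserving_def cmat_scale_add cmat_scale_diff cmat_adj_add cmat_adj_diff trace_add trace_sub)

lemma HP_midpoint_decomposition:
  fixes \<Psi> :: "complex^'n^'n \<Rightarrow> complex^'m^'m"
  assumes \<Psi>: "\<Psi> \<in> HP" and h: "hermitian_functional h" "h \<rho>1 = 1" "h \<rho>2 = -1"
    and \<rho>1: "cmat_adj \<rho>1 = \<rho>1" "trace \<rho>1 = 1"
    and \<rho>2: "cmat_adj \<rho>2 = \<rho>2" "trace \<rho>2 = 1"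
    and \<sigma>: "cmat_adj \<sigma> = \<sigma>" "trace \<sigma> = 1"
  obtains P1 P2 where "P1 \<in> HP" "P2 \<in> HP" "P1 \<rho>1 = \<sigma>" "P2 \<rho>2 = \<sigma>"
    and "\<Psi> = (\<lambda>X. (1/2::real) *\<^sub>R P1 X + (1/2::real) *\<^sub>R P2 X)"
proof -
  have herm: "hermitian_preserving \<Psi>" and tp: "trace_preserving \<Psi>"
    using \<Psi> by (auto simp: HP_def)
  define A1 where "A1 = \<sigma> - \<Psi> \<rho>1"
  define A2 where "A2 = \<Psi> \<rho>2 - \<sigma>"
  have "cmat_adj (\<Psi> \<rho>) = \<Psi> \<rho>" if "cmat_adj \<rho> = \<rho>" for \<rho>
    using herm that unfolding hermitian_preserving_def by metis
  then have A_hermitian: "cmat_adj A1 = A1" "cmat_adj A2 = A2"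
    using \<rho>1 \<rho>2 \<sigma> by (simp_all add: A1_def A2_def cmat_adj_diff)
  have A_traceless: "trace A1 = 0" "trace A2 = 0"
    using tp \<rho>1 \<rho>2 \<sigma> by (simp_all add: A1_def A2_def trace_sub trace_preserving_def)
  \<comment> \<open>g1 \<rho>1 = g2 \<rho>2 = 1 and g1 \<rho>2 = g2 \<rho>1 = 0, so D \<rho>1 = A1 and D \<rho>2 = A2 below\<close>
  define g1 where "g1 = (\<lambda>X. of_real (1/2) * (trace X + h X))"
  define g2 where "g2 = (\<lambda>X. of_real (1/2) * (trace X - h X))"
  have "hermitian_functional g1" "hermitian_functional g2"
    unfolding g1_def g2_def
    by (intro hermitian_functional_scale_real hermitian_functional_add hermitian_functional_diff
        hermitian_functional_trace h)+
  define D where "D = (\<lambda>X. cmat_scale (g1 X) A1 + cmat_scale (g2 X) A2)"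
  have "D \<in> traceless_HP"
    unfolding D_def
    by (intro traceless_HP_add rank_one_in_traceless_HP) fact+
  then have "(\<lambda>X. \<Psi> X + D X) \<in> HP" "(\<lambda>X. \<Psi> X - D X) \<in> HP"
    using HP_add_diff_traceless_HP \<Psi> by blast+
  moreover have "\<Psi> \<rho>1 + D \<rho>1 = \<sigma>" "\<Psi> \<rho>2 - D \<rho>2 = \<sigma>"
    using h \<rho>1 \<rho>2 by (simp_all add: D_def g1_def g2_def A1_def A2_def)
  moreover have "\<Psi> = (\<lambda>X. (1/2::real) *\<^sub>R (\<Psi> X + D X) + (1/2::real) *\<^sub>R (\<Psi> X - D X))"
    by (simp add: fun_eq_iff scaleR_add_right scaleR_diff_right flip: scaleR_add_left)
  ultimately show ?thesis
    using that by blast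
qed

definition diag_mat :: "('n \<Rightarrow> real) \<Rightarrow> complex^'n^'n" where
  "diag_mat d = (\<chi> i j. if i = j then complex_of_real (d i) else 0)"

lemma diag_mat_mult_vec_nth: "(diag_mat d *v v) $ i = complex_of_real (d i) * v $ i"
  by (simp add: diag_mat_def matrix_vector_mult_def mult_delta_left)

lemma density_matrix_diag_mat:
  fixes d :: "'n::finite \<Rightarrow> real"
  assumes "\<And>i. 0 \<le> d i" "sum d UNIV = 1"
  shows "density_matrix (diag_mat d)"
proof -
  have "Re (cnj (v $ i) * (diag_mat d *v v) $ i) = d i * ((Re (v $ i))\<^sup>2 + (Im (v $ i))\<^sup>2)" for v :: "complex^'n" and i
    by (simp add: diag_mat_mult_vec_nth power2_eq_square algebra_simps)
  then have "0 \<le> Re (\<Sum>i\<in>UNIV. cnj (v $ i) * (diag_mat d *v v) $ i)" for v :: "complex^'n"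
    using assms(1) by (simp add: Re_sum sum_nonneg)
  moreover have "cmat_adj (diag_mat d) = diag_mat d"
    by (simp add: cmat_adj_def diag_mat_def vec_eq_iff)
  moreover have "trace (diag_mat d) = 1"
    using assms(2) by (simp add: trace_def diag_mat_def flip: of_real_sum)
  ultimately show ?thesis
    by (simp add: density_matrix_def psd_def)
qed

lemma invertible_diag_mat: "(\<And>i. d i \<noteq> 0) \<Longrightarrow> invertible (diag_mat d)"
  by (simp add: invertible_det_nz det_diagonal diag_mat_def)

lemma HP_subset_Conv_SP:
  assumes "CARD('n::finite) \<ge> 2"
  shows "(HP :: (complex^'n^'n \<Rightarrow> complex^'m::finite^'m) set) \<subseteq> Conv SP"
proof
  fix \<Psi> :: "complex^'n^'n \<Rightarrow> complex^'m^'m"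
  assume \<Psi>: "\<Psi> \<in> HP"
  obtain a b :: 'n where "a \<noteq> b"
    using assms card_le_Suc0_iff_eq[of "UNIV :: 'n set"] by fastforce
  define e where "e = 1 / (real CARD('n) + 1)"
  have "e > 0"
    by (simp add: e_def)
  define \<rho> where "\<rho> c = diag_mat (\<lambda>i. if i = c then 2 * e else e)" for c :: 'n
  have \<rho>: "density_matrix (\<rho> c) \<and> invertible (\<rho> c)" for c
  proof -
    have "(\<Sum>i\<in>UNIV. if i = c then 2 * e else e) = (\<Sum>i\<in>UNIV. e + (if i = c then e else 0))"
      by (rule sum.cong) auto
    also have "\<dots> = real CARD('n) * e + e"
      by (simp add: sum.distrib)
    also have "\<dots> = 1"
      by (simp add: e_def field_simps)
    finally show ?thesis
      unfolding \<rho>_def using \<open>e > 0\<close>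
      by (intro conjI density_matrix_diag_mat invertible_diag_mat) auto
  qed
  define \<sigma> :: "complex^'m^'m" where "\<sigma> = diag_mat (\<lambda>_. 1 / real CARD('m))"
  have \<sigma>: "density_matrix \<sigma> \<and> invertible \<sigma>"
    unfolding \<sigma>_def by (intro conjI density_matrix_diag_mat invertible_diag_mat) auto
  define h :: "complex^'n^'n \<Rightarrow> complex" where "h X = of_real (1/e) * (X $ a $ a - X $ b $ b)" for X
  have h: "hermitian_functional h"
    unfolding h_def
    by (intro hermitian_functional_scale_real hermitian_functional_diff hermitian_functional_diag_entry)
  have h_\<rho>: "h (\<rho> a) = 1" "h (\<rho> b) = -1"
    using \<open>a \<noteq> b\<close> \<open>e > 0\<close> by (simp_all add: h_def \<rho>_def diag_mat_def flip: of_real_diff of_real_mult)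
  obtain P1 P2 where P: "P1 \<in> HP" "P2 \<in> HP" "P1 (\<rho> a) = \<sigma>" "P2 (\<rho> b) = \<sigma>"
    and \<Psi>_midpoint: "\<Psi> = (\<lambda>X. (1/2::real) *\<^sub>R P1 X + (1/2::real) *\<^sub>R P2 X)"
    by (rule HP_midpoint_decomposition[OF \<Psi> h h_\<rho>])
      (use \<rho> \<sigma> in \<open>auto simp: density_matrix_hermitian density_matrix_trace\<close>)
  have "P1 \<in> SP" "P2 \<in> SP"
    using SP_I[of P1 "\<rho> a"] SP_I[of P2 "\<rho> b"] P \<rho> \<sigma> by simp_all
  then show "\<Psi> \<in> Conv SP"
    unfolding \<Psi>_midpoint by (rule midpoint_in_Conv)
qed

theorem proposition3:
  assumes "CARD('n::finite) \<ge> 2"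
  shows "Conv (SP :: (complex^'n^'n \<Rightarrow> complex^'m::finite^'m) set) = HP
       \<and> Conv (SN :: (complex^'n^'n \<Rightarrow> complex^'m^'m) set) = HP"
proof -
  have "HP \<subseteq> Conv (SP :: (complex^'n^'n \<Rightarrow> complex^'m^'m) set)"
    using assms by (rule HP_subset_Conv_SP)
  moreover have "Conv (SP :: (complex^'n^'n \<Rightarrow> complex^'m^'m) set) \<subseteq> Conv SN"
    by (rule Conv_mono[OF SP_subset_SN])
  moreover have "Conv (SN :: (complex^'n^'n \<Rightarrow> complex^'m^'m) set) \<subseteq> HP"
    using Conv_mono[OF SN_subset_HP] Conv_HP_subset by (rule order_trans)
  ultimately show ?thesis
    by (meson order_trans subset_antisym)
qed

end
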